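(* Let $L>0$, $g_1\in\mathbb{R}$, and let $V:\mathbb{R}\to\mathbb{R}$ be a continuous $L$-periodic even function with $V_{min}\le V(x)\le V_{max}$ for all $x$. Let $\omega>-V_{min}$, $\tilde V(x)=\omega+V(x)$, $\lambda_j^2$ and $\rho_j$ ($j=1,2$) as below, and assume $$\min_{y\in[\rho_1,\rho_2],\ x\in[0,L]}\big\{5y^4+3g_1y^2-\tilde V(x)\big\}>0 .$$ Then there exist a positive $L$-periodic solution $\phi_+$ of $$\phi_{xx}+\tilde V(x)\phi-g_1\phi^3-\phi^5=0$$ with $\rho_1\le\phi_+\le\rho_2$, and an odd solution $\phi$ of the same equation on $\mathbb{R}$ (a dark soliton, giving the stationary solution $\psi(t,x)=e^{-i\omega t}\phi(x)$ of $i\psi_t+\psi_{xx}+V(x)\psi-g_1|\psi|^2\psi-|\psi|^4\psi=0$) such that $\phi(x)-\phi_+(x)\to0$ and $\phi_x(x)-\phi_{+,x}(x)\to 0$ as $x\to+\infty$, and $\phi(x)-\phi_-(x)\to0$ as $x\to-\infty$, where $\phi_-=-\phi_+$.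
   Context: $\lambda_1^2=\omega+V_{min}$, $\lambda_2^2=\omega+V_{max}$, and $\rho_j=\sqrt{\sqrt{g_1^2+4\lambda_j^2}-g_1}/\sqrt 2$ for $j=1,2$ (the positive nontrivial equilibria of $\phi_{xx}+\lambda_j^2\phi-g_1\phi^3-\phi^5=0$). *)

theory Defs
  imports "HOL-Analysis.Analysis"
begin

definition rho :: "real \<Rightarrow> real \<Rightarrow> real" where
  "rho g1 lam2 = sqrt (sqrt (g1^2 + 4 * lam2) - g1) / sqrt 2"

definition is_solution :: "(real \<Rightarrow> real) \<Rightarrow> real \<Rightarrow> (real \<Rightarrow> real) \<Rightarrow> bool" where
  "is_solution Vt g1 phi \<longleftrightarrow> (\<exists>phi' phi''.
      (\<forall>x. (phi has_real_derivative phi' x) (at x)) \<and>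
      (\<forall>x. (phi' has_real_derivative phi'' x) (at x)) \<and>
      (\<forall>x. phi'' x + Vt x * phi x - g1 * phi x ^ 3 - phi x ^ 5 = 0))"

end

theory Submission
  imports Defs
begin

text \<open>
  With \<open>f(x,u) = (\<omega> + V x) u - g\<^sub>1 u\<^sup>3 - u\<^sup>5\<close> and \<open>K\<close> large, \<open>F(x,u) = K u + f(x,u)\<close> is
  nondecreasing in \<open>u\<close> on \<open>[-\<rho>\<^sub>2, \<rho>\<^sub>2]\<close>, and bounded solutions are the fixed points of
  \<open>T u = (-d\<^sup>2/dx\<^sup>2 + K)\<^sup>-\<^sup>1 F(u)\<close>, convolution with the positive kernel
  \<open>exp (-\<surd>K \<bar>x - y\<bar>) / (2\<surd>K)\<close>. So \<open>T\<close> is monotone and commutes with translations and reflection.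
  Since \<open>\<rho>\<^sub>j\<^sup>4 + g\<^sub>1 \<rho>\<^sub>j\<^sup>2 = \<lambda>\<^sub>j\<^sup>2\<close>, the constants \<open>\<rho>\<^sub>1 \<le> \<rho>\<^sub>2\<close> are a sub- and a supersolution; iterating \<open>T\<close>
  from \<open>\<rho>\<^sub>2\<close> decreases to an even \<open>L\<close>-periodic solution \<open>\<phi>\<^sub>+\<close> with values in \<open>[\<rho>\<^sub>1, \<rho>\<^sub>2]\<close>.

  On odd functions \<open>T\<close> is monotone with respect to the order on \<open>[0, \<infinity>)\<close> only, the effective kernel
  being \<open>exp (-\<surd>K\<bar>x - y\<bar>) - exp (-\<surd>K\<bar>x + y\<bar>) \<ge> 0\<close>. The kink \<open>\<rho>\<^sub>1 tanh (a x)\<close> of a cubic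
  comparison equation is an odd subsolution lying below \<open>\<phi>\<^sub>+\<close> on \<open>[0, \<infinity>)\<close>, and iterating \<open>T\<close> from it
  increases to an odd solution \<open>\<phi>\<close> squeezed between the kink and \<open>\<phi>\<^sub>+\<close> there.

  Finally, the nondegeneracy hypothesis makes \<open>f(x, \<cdot>)\<close> uniformly decreasing near \<open>[\<rho>\<^sub>1, \<rho>\<^sub>2]\<close>, so
  \<open>d = \<phi>\<^sub>+ - \<phi> \<ge> 0\<close> eventually satisfies \<open>d'' \<ge> c d\<close>; being bounded, \<open>d\<close> is eventually
  nonincreasing, and \<open>d\<close> and \<open>d'\<close> tend to \<open>0\<close>. Oddness gives the limit at \<open>-\<infinity>\<close>.
\<close>

lemma has_bochner_integral_exp_abs:
  fixes k :: real assumes k: "k > 0"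
  shows "has_bochner_integral lborel (\<lambda>y. exp (- (k * \<bar>y\<bar>))) (2 / k)"
proof -
  define g where "g y = (if 0 \<le> y then exp (- k * y) else 0)" for y :: real
  have g_meas[measurable]: "g \<in> borel_measurable borel"
    unfolding g_def by measurable
  have g_has_integral: "(g has_integral 1 / k) UNIV"
    using has_integral_exp_minus_to_infinity[OF k, of 0]
    unfolding g_def has_integral_restrict_UNIV[of "{0..}", simplified, symmetric] by simp
  then have "integral\<^sup>N lborel g = 1 / k"
    by (rule nn_integral_has_integral_lborel[rotated 2]) (auto simp: g_def)
  then have g_int: "integrable lborel g"
    by (intro integrableI_nn_integral_finite[where x="1/k"]) (auto simp: g_def)
  have g_bochner: "has_bochner_integral lborel g (1 / k)"
    using g_int has_integral_integral_lborel[OF g_int] g_has_integral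
    by (simp add: has_bochner_integral_iff has_integral_unique)
  have "integrable lborel (\<lambda>y. g (0 + (-1) * y))"
    using lborel_integrable_real_affine_iff[where f=g and c="-1" and t=0] g_int by simp
  moreover have "(LINT y|lborel. g (0 + (-1) * y)) = 1 / k"
    using lborel_integral_real_affine[where f=g and c="-1" and t=0] g_bochner
    by (simp add: has_bochner_integral_iff)
  ultimately have "has_bochner_integral lborel (\<lambda>y. g (- y)) (1 / k)"
    by (simp add: has_bochner_integral_iff)
  with g_bochner have "has_bochner_integral lborel (\<lambda>y. g y + g (- y)) (1 / k + 1 / k)"
    by (rule has_bochner_integral_add)
  moreover have "AE y in lborel. g y + g (- y) = exp (- (k * \<bar>y\<bar>))"
    using AE_lborel_singleton[of 0] by eventually_elim (auto simp: g_def)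
  ultimately show ?thesis
    by (subst (asm) has_bochner_integral_cong_AE) auto
qed

lemma has_bochner_integral_exp_abs_diff:
  fixes k :: real assumes k: "k > 0"
  shows "has_bochner_integral lborel (\<lambda>y. exp (- (k * \<bar>x - y\<bar>))) (2 / k)"
proof -
  let ?e = "\<lambda>y::real. exp (- (k * \<bar>y\<bar>))"
  have int: "integrable lborel ?e" and val: "(LINT y|lborel. ?e y) = 2 / k"
    using has_bochner_integral_exp_abs[OF k] by (auto simp: has_bochner_integral_iff)
  have "integrable lborel (\<lambda>y. ?e (x + (-1) * y))"
    using lborel_integrable_real_affine_iff[where f="?e" and c="-1" and t=x] int by simp
  moreover have "(LINT y|lborel. ?e (x + (-1) * y)) = 2 / k"
    using lborel_integral_real_affine[where f="?e" and c="-1" and t=x] val by simp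
  ultimately show ?thesis by (simp add: has_bochner_integral_iff)
qed

lemma integrable_exp_abs_diff:
  fixes k :: real assumes "k > 0"
  shows "integrable lborel (\<lambda>y. exp (- (k * \<bar>x - y\<bar>)))"
  using has_bochner_integral_exp_abs_diff[OF assms] by (simp add: has_bochner_integral_iff)

lemma integral_exp_abs_diff:
  fixes k :: real assumes "k > 0"
  shows "(LINT y|lborel. exp (- (k * \<bar>x - y\<bar>))) = 2 / k"
  using has_bochner_integral_exp_abs_diff[OF assms] by (simp add: has_bochner_integral_iff)

lemma integrable_if_exp_abs_bound:
  fixes g :: "real \<Rightarrow> real"
  assumes k: "k > 0" and g: "g \<in> borel_measurable borel"
    and bound: "\<And>y. \<bar>g y\<bar> \<le> C * exp (- (k * \<bar>x - y\<bar>))"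
  shows "integrable lborel g"
proof (rule Bochner_Integration.integrable_bound)
  show "integrable lborel (\<lambda>y. C * exp (- (k * \<bar>x - y\<bar>)))"
    using integrable_exp_abs_diff[OF k, of x] by simp
  show "AE y in lborel. norm (g y) \<le> norm (C * exp (- (k * \<bar>x - y\<bar>)))"
    using bound by (auto intro: order_trans abs_ge_self)
qed (use g in simp)

lemma lborel_integral_indicator_Ioc:
  fixes q :: "real \<Rightarrow> real"
  assumes q: "continuous_on UNIV q" and ab: "a \<le> b"
  shows "(LINT y|lborel. indicator {a<..b} y * q y) = integral {a..b} q"
proof -
  have [measurable]: "q \<in> borel_measurable borel"
    using q by (rule borel_measurable_continuous_onI)
  have "set_integrable lborel {a..b} q"
    by (rule borel_integrable_atLeastAtMost') (use q continuous_on_subset in blast)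
  then have "integral {a..b} q = (LINT y:{a..b}|lborel. q y)"
    by (rule set_borel_integral_eq_integral(2)[symmetric])
  also have "\<dots> = (LINT y|lborel. indicator {a<..b} y * q y)"
    unfolding set_lebesgue_integral_def
    by (rule integral_cong_AE) (use AE_lborel_singleton[of a] in \<open>auto simp: indicator_def\<close>)
  finally show ?thesis ..
qed

lemma has_real_derivative_if_increments_integral:
  fixes P q :: "real \<Rightarrow> real"
  assumes q: "continuous_on UNIV q"
    and increments: "\<And>z. c < z \<Longrightarrow> P z - P c = integral {c..z} q" and cx: "c < x"
  shows "(P has_real_derivative q x) (at x)"
proof -
  have "((\<lambda>z. integral {c..z} q) has_real_derivative q x) (at x within {c..x + 1})"
    by (rule integral_has_real_derivative) (use q continuous_on_subset cx in auto)
  then have "((\<lambda>z. integral {c..z} q) has_real_derivative q x) (at x within {c<..<x + 1})"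
    by (rule DERIV_subset) auto
  then have "((\<lambda>z. integral {c..z} q) has_real_derivative q x) (at x)"
    using at_within_open[of x "{c<..<x + 1}"] cx by auto
  then have "((\<lambda>z. P c + integral {c..z} q) has_real_derivative q x) (at x)"
    using DERIV_add[OF DERIV_const] by fastforce
  then show ?thesis
    by (rule has_field_derivative_transform_within_open[of _ _ _ "{c<..}"])
       (use cx increments in \<open>auto simp: algebra_simps\<close>)
qed

lemma has_real_derivative_lower_tail_integral:
  fixes q :: "real \<Rightarrow> real"
  assumes q: "continuous_on UNIV q"
    and int: "\<And>z. integrable lborel (\<lambda>y. if y \<le> z then q y else 0)"
  shows "((\<lambda>z. LINT y|lborel. (if y \<le> z then q y else 0)) has_real_derivative q x) (at x)"
proof (rule has_real_derivative_if_increments_integral[OF q _, of "x - 1"])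
  fix z :: real assume "x - 1 < z"
  have "(LINT y|lborel. (if y \<le> z then q y else 0)) - (LINT y|lborel. (if y \<le> x - 1 then q y else 0))
      = (LINT y|lborel. (if y \<le> z then q y else 0) - (if y \<le> x - 1 then q y else 0))"
    using int int by (rule Bochner_Integration.integral_diff[symmetric])
  also have "\<dots> = (LINT y|lborel. indicator {x - 1<..z} y * q y)"
    using \<open>x - 1 < z\<close> by (intro Bochner_Integration.integral_cong) (auto simp: indicator_def)
  also have "\<dots> = integral {x - 1..z} q"
    using \<open>x - 1 < z\<close> by (intro lborel_integral_indicator_Ioc q) simp
  finally show "(LINT y|lborel. (if y \<le> z then q y else 0)) - (LINT y|lborel. (if y \<le> x - 1 then q y else 0))
      = integral {x - 1..z} q" .
qed simp

lemma has_real_derivative_upper_tail_integral: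
  fixes q :: "real \<Rightarrow> real"
  assumes q: "continuous_on UNIV q"
    and int: "\<And>z. integrable lborel (\<lambda>y. if z < y then q y else 0)"
  shows "((\<lambda>z. LINT y|lborel. (if z < y then q y else 0)) has_real_derivative - q x) (at x)"
proof -
  have "((\<lambda>z. - (LINT y|lborel. (if z < y then q y else 0))) has_real_derivative q x) (at x)"
  proof (rule has_real_derivative_if_increments_integral[OF q _, of "x - 1"])
    fix z :: real assume "x - 1 < z"
    have "- (LINT y|lborel. (if z < y then q y else 0)) - - (LINT y|lborel. (if x - 1 < y then q y else 0))
        = (LINT y|lborel. (if x - 1 < y then q y else 0) - (if z < y then q y else 0))"
      by (simp add: int)
    also have "\<dots> = (LINT y|lborel. indicator {x - 1<..z} y * q y)"
      using \<open>x - 1 < z\<close> by (intro Bochner_Integration.integral_cong) (auto simp: indicator_def)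
    also have "\<dots> = integral {x - 1..z} q"
      using \<open>x - 1 < z\<close> by (intro lborel_integral_indicator_Ioc q) simp
    finally show "- (LINT y|lborel. (if z < y then q y else 0)) - - (LINT y|lborel. (if x - 1 < y then q y else 0))
        = integral {x - 1..z} q" .
  qed simp
  then show ?thesis
    using DERIV_minus by fastforce
qed

lemma eq_0_if_exp_times_bounded:
  fixes a k C :: real
  assumes k: "k > 0" and bounded: "\<And>x. 0 \<le> x \<Longrightarrow> \<bar>a\<bar> * exp (k * x) \<le> C"
  shows "a = 0"
proof (rule ccontr)
  assume "a \<noteq> 0"
  define x where "x = (\<bar>C\<bar> + 1) / (\<bar>a\<bar> * k)"
  have x: "0 \<le> x" "\<bar>a\<bar> * (1 + k * x) = \<bar>a\<bar> + \<bar>C\<bar> + 1"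
    using \<open>a \<noteq> 0\<close> k by (auto simp: x_def field_simps)
  have "\<bar>a\<bar> * (1 + k * x) \<le> \<bar>a\<bar> * exp (k * x)"
    by (intro mult_left_mono exp_ge_add_one_self) auto
  also have "\<dots> \<le> C"
    using bounded[OF x(1)] .
  finally show False
    using x(2) by linarith
qed

text \<open>\<open>(d' - k d) exp (kx)\<close> and \<open>(d' + k d) exp (-kx)\<close> are constant, so \<open>d\<close> is a combination of
  \<open>exp (kx)\<close> and \<open>exp (-kx)\<close>; boundedness kills both coefficients.\<close>
lemma bounded_solution_of_homogeneous_eq_0:
  fixes d d' :: "real \<Rightarrow> real"
  assumes k: "k > 0"
    and d: "\<And>x. (d has_real_derivative d' x) (at x)"
    and d': "\<And>x. (d' has_real_derivative k\<^sup>2 * d x) (at x)"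
    and bound: "\<And>x. \<bar>d x\<bar> \<le> B"
  shows "d x = 0"
proof -
  define p where "p x = (d' x - k * d x) * exp (k * x)" for x
  define q where "q x = (d' x + k * d x) * exp (- (k * x))" for x
  have "(p has_real_derivative 0) (at x)" "(q has_real_derivative 0) (at x)" for x
    unfolding p_def[abs_def] q_def[abs_def] using d[of x] d'[of x]
    by (auto intro!: derivative_eq_intros simp: algebra_simps power2_eq_square)
  then have p_const: "p x = p 0" and q_const: "q x = q 0" for x
    using DERIV_isconst_all by blast+
  have d_eq: "2 * k * d x = q 0 * exp (k * x) - p 0 * exp (- (k * x))" for x
  proof -
    have "q 0 * exp (k * x) = d' x + k * d x"
      using q_const[of x] unfolding q_def by (simp add: exp_minus field_simps)
    moreover have "p 0 * exp (- (k * x)) = d' x - k * d x"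
      using p_const[of x] unfolding p_def by (simp add: exp_minus field_simps)
    ultimately show ?thesis
      by simp
  qed
  have "q 0 = 0"
  proof (rule eq_0_if_exp_times_bounded[OF k])
    fix x :: real assume "0 \<le> x"
    have "\<bar>q 0\<bar> * exp (k * x) = \<bar>2 * k * d x + p 0 * exp (- (k * x))\<bar>"
      using d_eq[of x] by (simp add: abs_mult)
    also have "\<dots> \<le> 2 * k * \<bar>d x\<bar> + \<bar>p 0\<bar> * exp (- (k * x))"
      using k abs_triangle_ineq[of "2 * k * d x" "p 0 * exp (- (k * x))"] by (simp add: abs_mult)
    also have "\<dots> \<le> 2 * k * B + \<bar>p 0\<bar> * 1"
      using k \<open>0 \<le> x\<close> bound[of x] by (intro add_mono mult_left_mono) auto
    finally show "\<bar>q 0\<bar> * exp (k * x) \<le> 2 * k * B + \<bar>p 0\<bar>"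
      by simp
  qed
  have "p 0 = 0"
  proof (rule eq_0_if_exp_times_bounded[OF k])
    fix x :: real
    have "\<bar>p 0\<bar> * exp (k * x) = \<bar>2 * k * d (- x)\<bar>"
      using d_eq[of "- x"] \<open>q 0 = 0\<close> by (simp add: abs_mult)
    also have "\<dots> \<le> 2 * k * B"
      using k bound[of "- x"] by (simp add: abs_mult)
    finally show "\<bar>p 0\<bar> * exp (k * x) \<le> 2 * k * B" .
  qed
  then show ?thesis
    using d_eq[of x] \<open>q 0 = 0\<close> k by simp
qed

context
  fixes d d' d'' :: "real \<Rightarrow> real" and X B c :: real
  assumes d: "\<And>x. (d has_real_derivative d' x) (at x)"
    and d': "\<And>x. (d' has_real_derivative d'' x) (at x)"
    and d_nonneg: "\<And>x. X \<le> x \<Longrightarrow> 0 \<le> d x" and d_le: "\<And>x. X \<le> x \<Longrightarrow> d x \<le> B"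
    and d''_ge: "\<And>x. X \<le> x \<Longrightarrow> c * d x \<le> d'' x" and c_pos: "c > 0"
begin

private lemma deriv_mono: "X \<le> s \<Longrightarrow> s \<le> t \<Longrightarrow> d' s \<le> d' t"
proof -
  have "0 \<le> d'' x" if "X \<le> x" for x
  proof -
    have "0 \<le> c * d x"
      using c_pos d_nonneg[OF that] by simp
    then show ?thesis
      using d''_ge[OF that] by linarith
  qed
  then show "X \<le> s \<Longrightarrow> s \<le> t \<Longrightarrow> d' s \<le> d' t"
    using DERIV_nonneg_imp_nondecreasing[of s t d'] d' by force
qed

text \<open>A convex function that stays bounded on a half-line is nonincreasing there.\<close>
private lemma deriv_nonpos:
  assumes x: "X \<le> x" shows "d' x \<le> 0"
proof (rule ccontr)
  assume "\<not> d' x \<le> 0"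
  define t where "t = x + (\<bar>B\<bar> + 1) / d' x"
  have xt: "x < t" and slope: "(t - x) * d' x = \<bar>B\<bar> + 1"
    using \<open>\<not> d' x \<le> 0\<close> by (auto simp: t_def add_pos_nonneg)
  obtain z where z: "x < z" "d t - d x = (t - x) * d' z"
    using MVT2[OF xt d] by blast
  have "(t - x) * d' x \<le> (t - x) * d' z"
    using deriv_mono[of x z] x z xt by (intro mult_left_mono) auto
  then show False
    using z slope d_nonneg[OF x] d_le[of t] x xt by linarith
qed

lemma convex_decay_tendsto_0: "(d \<longlongrightarrow> 0) at_top"
proof (rule tendstoI)
  fix e :: real assume e: "e > 0"
  have "\<exists>x0\<ge>X. d x0 < e"
  proof (rule ccontr)
    assume far: "\<not> (\<exists>x0\<ge>X. d x0 < e)"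
    have ge: "c * e \<le> d'' x" if "X \<le> x" for x
    proof -
      have "e \<le> d x"
        using far that by (auto simp: not_less)
      then have "c * e \<le> c * d x"
        using c_pos by simp
      then show ?thesis
        using d''_ge[OF that] by linarith
    qed
    define t where "t = X + (\<bar>d' X\<bar> + 1) / (c * e)"
    have Xt: "X < t" and slope: "(t - X) * (c * e) = \<bar>d' X\<bar> + 1"
      using e c_pos by (auto simp: t_def add_pos_nonneg)
    obtain z where z: "X < z" "d' t - d' X = (t - X) * d'' z"
      using MVT2[OF Xt d'] by blast
    have "(t - X) * (c * e) \<le> (t - X) * d'' z"
      using ge[of z] z Xt by (intro mult_left_mono) auto
    then show False
      using z slope deriv_nonpos[of t] Xt by linarith
  qed
  then obtain x0 where x0: "X \<le> x0" "d x0 < e"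
    by blast
  have "d x < e" if "x0 \<le> x" for x
    using DERIV_nonpos_imp_nonincreasing[of x0 x d] that d deriv_nonpos x0 by fastforce
  then show "eventually (\<lambda>x. dist (d x) 0 < e) at_top"
    unfolding eventually_at_top_linorder using d_nonneg x0 by (auto intro!: exI[of _ x0])
qed

lemma convex_decay_deriv_tendsto_0: "(d' \<longlongrightarrow> 0) at_top"
proof (rule tendstoI)
  fix e :: real assume e: "e > 0"
  have "\<exists>x0\<ge>X. - e < d' x0"
  proof (rule ccontr)
    assume "\<not> (\<exists>x0\<ge>X. - e < d' x0)"
    then have le: "X \<le> x \<Longrightarrow> d' x \<le> - e" for x
      by force
    define t where "t = X + (\<bar>d X\<bar> + 1) / e"
    have Xt: "X < t" and slope: "(t - X) * e = \<bar>d X\<bar> + 1"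
      using e by (auto simp: t_def add_pos_nonneg)
    obtain z where z: "X < z" "d t - d X = (t - X) * d' z"
      using MVT2[OF Xt d] by blast
    have "(t - X) * d' z \<le> (t - X) * (- e)"
      using le[of z] z Xt by (intro mult_left_mono) auto
    then show False
      using z slope d_nonneg[of t] Xt abs_ge_self[of "d X"] by simp
  qed
  then obtain x0 where x0: "X \<le> x0" "- e < d' x0"
    by blast
  have "\<bar>d' x\<bar> < e" if "x0 \<le> x" for x
    using deriv_mono[of x0 x] deriv_nonpos[of x] that x0 by auto
  then show "eventually (\<lambda>x. dist (d' x) 0 < e) at_top"
    unfolding eventually_at_top_linorder by (auto simp: dist_real_def intro!: exI[of _ x0])
qed

end

lemma pointwise_limit_of_odd_increasing:
  fixes us :: "nat \<Rightarrow> real \<Rightarrow> real"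
  assumes odd: "\<And>n x. us n (- x) = - us n x"
    and increasing: "\<And>n x. 0 \<le> x \<Longrightarrow> us n x \<le> us (Suc n) x"
    and bounded: "\<And>n x. 0 \<le> x \<Longrightarrow> us n x \<le> B x"
  obtains \<phi> where "\<And>x. (\<lambda>n. us n x) \<longlonglongrightarrow> \<phi> x" and "\<And>x. \<phi> (- x) = - \<phi> x"
proof -
  have lim_nonneg: "(\<lambda>n. us n x) \<longlonglongrightarrow> (SUP n. us n x)" if "0 \<le> x" for x
  proof (rule LIMSEQ_incseq_SUP)
    show "bdd_above (range (\<lambda>n. us n x))"
      using bounded[OF that] by (auto intro!: bdd_aboveI[of _ "B x"])
    show "incseq (\<lambda>n. us n x)"
      using increasing[OF that] by (rule incseq_SucI)
  qed
  define \<phi> where "\<phi> x = (if 0 \<le> x then SUP n. us n x else - (SUP n. us n (- x)))" for x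
  have lim: "(\<lambda>n. us n x) \<longlonglongrightarrow> \<phi> x" for x
  proof (cases "0 \<le> x")
    case False
    have "(\<lambda>n. - us n (- x)) \<longlonglongrightarrow> \<phi> x"
      unfolding \<phi>_def using False lim_nonneg[of "- x"] by (simp add: tendsto_minus)
    then show ?thesis
      by (simp add: odd)
  qed (simp add: \<phi>_def lim_nonneg)
  moreover have "\<phi> (- x) = - \<phi> x" for x
  proof (rule LIMSEQ_unique[OF lim])
    show "(\<lambda>n. us n (- x)) \<longlonglongrightarrow> - \<phi> x"
      using tendsto_minus[OF lim[of x]] by (simp add: odd)
  qed
  ultimately show ?thesis
    using that by blast
qed

lemma pos_on_Icc_extends_left:
  fixes P :: "real \<Rightarrow> real"
  assumes cont: "continuous_on UNIV P" and pos: "\<And>y. y \<in> {a..b} \<Longrightarrow> P y > 0" and ab: "a \<le> b"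
  obtains c \<delta> where "c > 0" "\<delta> > 0" "\<And>y. a - \<delta> \<le> y \<Longrightarrow> y \<le> b \<Longrightarrow> c \<le> P y"
proof -
  have "\<exists>y0\<in>{a..b}. \<forall>y\<in>{a..b}. P y0 \<le> P y"
    by (intro continuous_attains_inf compact_Icc continuous_on_subset[OF cont]) (use ab in auto)
  then obtain y0 where y0: "y0 \<in> {a..b}" "\<And>y. y \<in> {a..b} \<Longrightarrow> P y0 \<le> P y"
    by blast
  define c where "c = P y0 / 2"
  have c: "c > 0"
    unfolding c_def using pos y0(1) by simp
  have "continuous (at a) P"
    using cont by (simp add: continuous_on_eq_continuous_at)
  then obtain \<delta> where \<delta>: "\<delta> > 0" "\<And>y. dist y a < \<delta> \<Longrightarrow> dist (P y) (P a) < c"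
    using c unfolding continuous_at_eps_delta by blast
  have "c \<le> P y" if "a - \<delta> / 2 \<le> y" "y \<le> b" for y
  proof (cases "a \<le> y")
    case True
    then show ?thesis
      using y0(2)[of y] that c by (auto simp: c_def)
  next
    case False
    then have "\<bar>P y - P a\<bar> < c"
      using \<delta>(2)[of y] \<delta>(1) that by (simp add: dist_real_def)
    moreover have "2 * c \<le> P a"
      using y0(2)[of a] ab by (simp add: c_def)
    ultimately show ?thesis
      by linarith
  qed
  then show ?thesis
    using c \<delta>(1) by (intro that[of c "\<delta> / 2"]) auto
qed

lemma abs_tanh_le_1: "\<bar>tanh (z::real)\<bar> \<le> 1"
  using tanh_real_bounds[of z] by auto

section \<open>The resolvent of \<open>-d\<^sup>2/dx\<^sup>2 + k\<^sup>2\<close> on the line\<close>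

text \<open>Convolution with the Green's function \<open>exp (-k\<bar>x-y\<bar>) / (2k)\<close> of \<open>-u'' + k\<^sup>2 u\<close> on the line;
  \<open>green_left\<close> and \<open>green_right\<close> are the two halves of the kernel after factoring out \<open>exp (\<plusminus>kx)\<close>.\<close>

definition green :: "real \<Rightarrow> (real \<Rightarrow> real) \<Rightarrow> real \<Rightarrow> real" where
  "green k h x = (LINT y|lborel. exp (- (k * \<bar>x - y\<bar>)) * h y) / (2 * k)"

definition green_left :: "real \<Rightarrow> (real \<Rightarrow> real) \<Rightarrow> real \<Rightarrow> real" where
  "green_left k h x = (LINT y|lborel. (if y \<le> x then exp (k * y) * h y else 0))"

definition green_right :: "real \<Rightarrow> (real \<Rightarrow> real) \<Rightarrow> real \<Rightarrow> real" where
  "green_right k h x = (LINT y|lborel. (if x < y then exp (- (k * y)) * h y else 0))"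

definition green_deriv :: "real \<Rightarrow> (real \<Rightarrow> real) \<Rightarrow> real \<Rightarrow> real" where
  "green_deriv k h x = (exp (k * x) * green_right k h x - exp (- (k * x)) * green_left k h x) / 2"

lemma exp_kernel_left: "(y::real) \<le> x \<Longrightarrow> exp (k * y) = exp (k * x) * exp (- (k * \<bar>x - y\<bar>))"
  by (simp add: algebra_simps flip: exp_add)

lemma exp_kernel_right: "(x::real) < y \<Longrightarrow> exp (- (k * y)) = exp (- (k * x)) * exp (- (k * \<bar>x - y\<bar>))"
  by (simp add: abs_of_neg algebra_simps flip: exp_add)

locale bounded_source =
  fixes k M :: real and h :: "real \<Rightarrow> real"
  assumes k_pos: "k > 0" and h_cont: "continuous_on UNIV h" and h_bound: "\<And>y. \<bar>h y\<bar> \<le> M"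
begin

lemma h_measurable[measurable]: "h \<in> borel_measurable borel"
  using h_cont by (rule borel_measurable_continuous_onI)

lemma M_nonneg: "0 \<le> M"
  using h_bound[of 0] by linarith

lemma abs_kernel_times_h_le: "\<bar>exp (- (k * \<bar>x - y\<bar>)) * h y\<bar> \<le> M * exp (- (k * \<bar>x - y\<bar>))"
  using mult_left_mono[OF h_bound[of y], of "exp (- (k * \<bar>x - y\<bar>))"] by (simp add: abs_mult mult.commute)

lemma integrable_kernel_times_h: "integrable lborel (\<lambda>y. exp (- (k * \<bar>x - y\<bar>)) * h y)"
  by (rule integrable_if_exp_abs_bound[OF k_pos _ abs_kernel_times_h_le]) simp

lemma integrable_reflected_kernel_times_h: "integrable lborel (\<lambda>y. exp (- (k * \<bar>x + y\<bar>)) * h y)"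
proof -
  have "\<bar>- x - y\<bar> = \<bar>x + y\<bar>" for y :: real
    by arith
  then show ?thesis
    using integrable_kernel_times_h[of "- x"] by simp
qed

lemma abs_green_left_integrand_le:
  "\<bar>if y \<le> x then exp (k * y) * h y else 0\<bar> \<le> M * exp (k * x) * exp (- (k * \<bar>x - y\<bar>))"
proof (cases "y \<le> x")
  case True
  have "\<bar>exp (k * y) * h y\<bar> \<le> exp (k * y) * M"
    by (simp add: abs_mult h_bound)
  then show ?thesis
    using True exp_kernel_left[OF True, of k] by (simp add: mult_ac)
qed (simp add: M_nonneg)

lemma abs_green_right_integrand_le:
  "\<bar>if x < y then exp (- (k * y)) * h y else 0\<bar> \<le> M * exp (- (k * x)) * exp (- (k * \<bar>x - y\<bar>))"
proof (cases "x < y")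
  case True
  have "\<bar>exp (- (k * y)) * h y\<bar> \<le> exp (- (k * y)) * M"
    by (simp add: abs_mult h_bound)
  then show ?thesis
    using True exp_kernel_right[OF True, of k] by (simp add: mult_ac)
qed (simp add: M_nonneg)

lemma integrable_green_left: "integrable lborel (\<lambda>y. if y \<le> x then exp (k * y) * h y else 0)"
  by (rule integrable_if_exp_abs_bound[OF k_pos _ abs_green_left_integrand_le]) simp

lemma integrable_green_right: "integrable lborel (\<lambda>y. if x < y then exp (- (k * y)) * h y else 0)"
  by (rule integrable_if_exp_abs_bound[OF k_pos _ abs_green_right_integrand_le]) simp

lemma green_eq_left_right:
  "green k h x = (exp (- (k * x)) * green_left k h x + exp (k * x) * green_right k h x) / (2 * k)"
proof -
  have "exp (- (k * \<bar>x - y\<bar>)) * h y =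
      exp (- (k * x)) * (if y \<le> x then exp (k * y) * h y else 0)
      + exp (k * x) * (if x < y then exp (- (k * y)) * h y else 0)" for y
  proof (cases "y \<le> x")
    case True
    then show ?thesis using exp_kernel_left[OF True, of k] by (simp add: exp_minus field_simps)
  next
    case False
    then have "x < y" by simp
    then show ?thesis using exp_kernel_right[OF \<open>x < y\<close>, of k] False by (simp add: exp_minus field_simps)
  qed
  then have "(LINT y|lborel. exp (- (k * \<bar>x - y\<bar>)) * h y)
      = exp (- (k * x)) * green_left k h x + exp (k * x) * green_right k h x"
    unfolding green_left_def green_right_def
    by (simp add: integrable_green_left integrable_green_right)
  then show ?thesis
    unfolding green_def by simp
qed

lemma has_real_derivative_green_left: "(green_left k h has_real_derivative exp (k * x) * h x) (at x)"
  unfolding green_left_def[abs_def]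
  by (rule has_real_derivative_lower_tail_integral[OF _ integrable_green_left])
     (intro continuous_intros h_cont)

lemma has_real_derivative_green_right:
  "(green_right k h has_real_derivative - (exp (- (k * x)) * h x)) (at x)"
  unfolding green_right_def[abs_def]
  by (rule has_real_derivative_upper_tail_integral[OF _ integrable_green_right])
     (intro continuous_intros h_cont)

lemma has_real_derivative_green: "(green k h has_real_derivative green_deriv k h x) (at x)"
proof -
  have "green k h = (\<lambda>x. (exp (- (k * x)) * green_left k h x + exp (k * x) * green_right k h x) / (2 * k))"
    using green_eq_left_right by auto
  then show ?thesis
    using has_real_derivative_green_left[of x] has_real_derivative_green_right[of x] k_pos
    by (auto intro!: derivative_eq_intros simp: green_deriv_def exp_minus field_simps)
qed

lemma has_real_derivative_green_deriv:
  "(green_deriv k h has_real_derivative k\<^sup>2 * green k h x - h x) (at x)"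
  unfolding green_deriv_def[abs_def] green_eq_left_right
  using has_real_derivative_green_left[of x] has_real_derivative_green_right[of x] k_pos
  by (auto intro!: derivative_eq_intros simp: exp_minus field_simps power2_eq_square)

lemma continuous_on_green: "continuous_on UNIV (green k h)"
  by (intro continuous_at_imp_continuous_on ballI DERIV_isCont[OF has_real_derivative_green])

lemma abs_green_le: "\<bar>green k h x\<bar> \<le> M / k\<^sup>2"
proof -
  have "\<bar>LINT y|lborel. exp (- (k * \<bar>x - y\<bar>)) * h y\<bar> \<le> (LINT y|lborel. M * exp (- (k * \<bar>x - y\<bar>)))"
    by (rule integral_abs_bound_integral[OF integrable_kernel_times_h])
       (use integrable_exp_abs_diff[OF k_pos] abs_kernel_times_h_le in auto)
  also have "\<dots> = M * (2 / k)"
    using integral_exp_abs_diff[OF k_pos] by simp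
  finally show ?thesis
    unfolding green_def using k_pos by (simp add: abs_div field_simps power2_eq_square)
qed

lemma abs_green_left_le: "\<bar>green_left k h x\<bar> \<le> M * exp (k * x) * (2 / k)"
proof -
  have "\<bar>green_left k h x\<bar> \<le> (LINT y|lborel. M * exp (k * x) * exp (- (k * \<bar>x - y\<bar>)))"
    unfolding green_left_def
    by (rule integral_abs_bound_integral[OF integrable_green_left])
       (use integrable_exp_abs_diff[OF k_pos] abs_green_left_integrand_le in auto)
  also have "\<dots> = M * exp (k * x) * (2 / k)"
    using integral_exp_abs_diff[OF k_pos] by simp
  finally show ?thesis .
qed

lemma abs_green_right_le: "\<bar>green_right k h x\<bar> \<le> M * exp (- (k * x)) * (2 / k)"
proof -
  have "\<bar>green_right k h x\<bar> \<le> (LINT y|lborel. M * exp (- (k * x)) * exp (- (k * \<bar>x - y\<bar>)))"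
    unfolding green_right_def
    by (rule integral_abs_bound_integral[OF integrable_green_right])
       (use integrable_exp_abs_diff[OF k_pos] abs_green_right_integrand_le in auto)
  also have "\<dots> = M * exp (- (k * x)) * (2 / k)"
    using integral_exp_abs_diff[OF k_pos] by simp
  finally show ?thesis .
qed

lemma abs_green_deriv_le: "\<bar>green_deriv k h x\<bar> \<le> 2 * M / k"
proof -
  have "\<bar>green_deriv k h x\<bar> \<le> (exp (k * x) * \<bar>green_right k h x\<bar> + exp (- (k * x)) * \<bar>green_left k h x\<bar>) / 2"
    unfolding green_deriv_def
    using abs_triangle_ineq4[of "exp (k * x) * green_right k h x" "exp (- (k * x)) * green_left k h x"]
    by (simp add: abs_mult divide_right_mono)
  also have "\<dots> \<le> (exp (k * x) * (M * exp (- (k * x)) * (2 / k)) + exp (- (k * x)) * (M * exp (k * x) * (2 / k))) / 2"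
    by (intro divide_right_mono add_mono mult_left_mono abs_green_left_le abs_green_right_le) auto
  also have "\<dots> = 2 * M / k"
    by (simp add: exp_minus field_simps)
  finally show ?thesis .
qed

lemma green_lipschitz: "\<bar>green k h x - green k h y\<bar> \<le> 2 * M / k * \<bar>x - y\<bar>"
proof -
  have "\<bar>green k h b - green k h a\<bar> \<le> 2 * M / k * (b - a)" if ab: "a < b" for a b
  proof -
    obtain z where "green k h b - green k h a = (b - a) * green_deriv k h z"
      using MVT2[OF ab has_real_derivative_green] by blast
    moreover have "(b - a) * \<bar>green_deriv k h z\<bar> \<le> (b - a) * (2 * M / k)"
      using ab abs_green_deriv_le[of z] by (intro mult_left_mono) auto
    ultimately show ?thesis
      using ab by (simp add: abs_mult mult.commute)
  qed
  from this[of x y] this[of y x] show ?thesis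
    by (cases x y rule: linorder_cases) (auto simp: abs_minus_commute)
qed

end

lemma bounded_source_const: "k > 0 \<Longrightarrow> bounded_source k \<bar>c\<bar> (\<lambda>_. c)"
  by unfold_locales auto

lemma green_const: "k > 0 \<Longrightarrow> green k (\<lambda>_. c) x = c / k\<^sup>2"
  using integral_exp_abs_diff[of k x] by (simp add: green_def power2_eq_square)

lemma green_mono:
  assumes "bounded_source k M1 h1" "bounded_source k M2 h2" and le: "\<And>y. h1 y \<le> h2 y"
  shows "green k h1 x \<le> green k h2 x"
proof -
  have "(LINT y|lborel. exp (- (k * \<bar>x - y\<bar>)) * h1 y) \<le> (LINT y|lborel. exp (- (k * \<bar>x - y\<bar>)) * h2 y)"
    using bounded_source.integrable_kernel_times_h[OF assms(1)]
      bounded_source.integrable_kernel_times_h[OF assms(2)]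
    by (rule integral_mono) (simp add: le)
  then show ?thesis
    unfolding green_def using bounded_source.k_pos[OF assms(1)] by (simp add: divide_right_mono)
qed

lemma green_periodic:
  assumes "\<And>y. h (y + L) = h y"
  shows "green k h (x + L) = green k h x"
proof -
  have "(LINT y|lborel. exp (- (k * \<bar>x + L - y\<bar>)) * h y) =
      \<bar>1\<bar> *\<^sub>R (LINT y|lborel. exp (- (k * \<bar>x + L - (L + 1 * y)\<bar>)) * h (L + 1 * y))"
    by (rule lborel_integral_real_affine) simp
  also have "\<dots> = (LINT y|lborel. exp (- (k * \<bar>x - y\<bar>)) * h y)"
    using assms by (simp add: add.commute)
  finally show ?thesis
    unfolding green_def by simp
qed

lemma lborel_integral_exp_abs_reflect:
  fixes h :: "real \<Rightarrow> real"
  shows "(LINT y|lborel. exp (- (k * \<bar>x + y\<bar>)) * h (- y)) = (LINT y|lborel. exp (- (k * \<bar>x - y\<bar>)) * h y)"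
  using lborel_integral_real_affine[where f="\<lambda>y. exp (- (k * \<bar>x - y\<bar>)) * h y" and c="-1" and t=0]
  by simp

lemma green_reflect: "green k h (- x) = green k (\<lambda>y. h (- y)) x"
  using lborel_integral_exp_abs_reflect[of k x "\<lambda>y. h (- y)"]
  by (simp add: green_def abs_minus_commute add.commute)

lemma green_uminus: "green k (\<lambda>y. - h y) x = - green k h x"
  unfolding green_def by simp

lemma green_odd:
  assumes "\<And>y. h (- y) = - h y"
  shows "green k h (- x) = - green k h x"
  using green_reflect[of k h x] green_uminus[of k h x] by (simp add: assms)

lemma green_even:
  assumes "\<And>y. h (- y) = h y"
  shows "green k h (- x) = green k h x"
  using green_reflect[of k h x] by (simp add: assms)

text \<open>For odd sources only the values on \<open>[0, \<infinity>)\<close> matter: against an odd \<open>h\<close> the kernel can be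
  replaced by \<open>exp (-k\<bar>x-y\<bar>) - exp (-k\<bar>x+y\<bar>)\<close>, which has the sign of \<open>y\<close> when \<open>x \<ge> 0\<close>.\<close>
lemma green_mono_odd:
  assumes H1: "bounded_source k M1 h1" and H2: "bounded_source k M2 h2"
    and odd1: "\<And>y. h1 (- y) = - h1 y" and odd2: "\<And>y. h2 (- y) = - h2 y"
    and le: "\<And>y. 0 \<le> y \<Longrightarrow> h1 y \<le> h2 y" and x: "0 \<le> x"
  shows "green k h1 x \<le> green k h2 x"
proof -
  have k: "k > 0"
    using bounded_source.k_pos[OF H1] .
  define D where "D y = exp (- (k * \<bar>x - y\<bar>)) - exp (- (k * \<bar>x + y\<bar>))" for y
  have odd_kernel: "2 * (LINT y|lborel. exp (- (k * \<bar>x - y\<bar>)) * h y) = (LINT y|lborel. D y * h y)"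
    if H: "bounded_source k M h" and odd: "\<And>y. h (- y) = - h y" for M h
  proof -
    have "(LINT y|lborel. exp (- (k * \<bar>x + y\<bar>)) * h y) = - (LINT y|lborel. exp (- (k * \<bar>x - y\<bar>)) * h y)"
      using lborel_integral_exp_abs_reflect[of k x h] by (simp add: odd)
    then show ?thesis
      unfolding D_def
      using bounded_source.integrable_kernel_times_h[OF H] bounded_source.integrable_reflected_kernel_times_h[OF H]
      by (simp add: left_diff_distrib)
  qed
  have sign: "D y * h1 y \<le> D y * h2 y" for y
  proof (cases "0 \<le> y")
    case True
    then have "0 \<le> D y"
      using x k by (simp add: D_def mult_left_mono)
    then show ?thesis using le[OF True] by (simp add: mult_left_mono)
  next
    case False
    then have "D y \<le> 0"
      using x k by (simp add: D_def mult_left_mono)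
    moreover have "h2 y \<le> h1 y"
      using le[of "- y"] False by (simp add: odd1 odd2)
    ultimately show ?thesis by (simp add: mult_left_mono_neg)
  qed
  have integrable_D: "integrable lborel (\<lambda>y. D y * h y)" if H: "bounded_source k M h" for M h
    unfolding D_def left_diff_distrib
    using bounded_source.integrable_kernel_times_h[OF H] bounded_source.integrable_reflected_kernel_times_h[OF H]
    by (rule Bochner_Integration.integrable_diff)
  have "(LINT y|lborel. D y * h1 y) \<le> (LINT y|lborel. D y * h2 y)"
    using integrable_D[OF H1] integrable_D[OF H2] sign by (rule integral_mono)
  then have "(LINT y|lborel. exp (- (k * \<bar>x - y\<bar>)) * h1 y) \<le> (LINT y|lborel. exp (- (k * \<bar>x - y\<bar>)) * h2 y)"
    using odd_kernel[where h=h1, OF H1 odd1] odd_kernel[where h=h2, OF H2 odd2] by linarith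
  then show ?thesis
    unfolding green_def using k by (simp add: divide_right_mono)
qed

lemma green_tendsto:
  assumes H: "\<And>n. bounded_source k M (hs n)" and H0: "bounded_source k M h"
    and lim: "\<And>y. (\<lambda>n. hs n y) \<longlonglongrightarrow> h y"
  shows "(\<lambda>n. green k (hs n) x) \<longlonglongrightarrow> green k h x"
proof -
  have k: "k > 0"
    using bounded_source.k_pos[OF H0] .
  have "(\<lambda>n. LINT y|lborel. exp (- (k * \<bar>x - y\<bar>)) * hs n y) \<longlonglongrightarrow> (LINT y|lborel. exp (- (k * \<bar>x - y\<bar>)) * h y)"
  proof (rule integral_dominated_convergence[where w="\<lambda>y. M * exp (- (k * \<bar>x - y\<bar>))"])
    show "(\<lambda>y. exp (- (k * \<bar>x - y\<bar>)) * h y) \<in> borel_measurable lborel"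
      using bounded_source.h_measurable[OF H0] by measurable
    show "(\<lambda>y. exp (- (k * \<bar>x - y\<bar>)) * hs n y) \<in> borel_measurable lborel" for n
      using bounded_source.h_measurable[OF H] by measurable
    show "integrable lborel (\<lambda>y. M * exp (- (k * \<bar>x - y\<bar>)))"
      using integrable_exp_abs_diff[OF k, of x] by simp
    show "AE y in lborel. (\<lambda>n. exp (- (k * \<bar>x - y\<bar>)) * hs n y) \<longlonglongrightarrow> exp (- (k * \<bar>x - y\<bar>)) * h y"
      using lim by (auto intro!: tendsto_mult)
    show "AE y in lborel. norm (exp (- (k * \<bar>x - y\<bar>)) * hs n y) \<le> M * exp (- (k * \<bar>x - y\<bar>))" for n
      using bounded_source.abs_kernel_times_h_le[OF H] by simp
  qed
  then show ?thesis
    unfolding green_def by (intro tendsto_divide) (use k in auto)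
qed

lemma green_of_bounded_solution:
  fixes w w' w'' :: "real \<Rightarrow> real"
  assumes k: "k > 0"
    and w': "\<And>x. (w has_real_derivative w' x) (at x)"
    and w'': "\<And>x. (w' has_real_derivative w'' x) (at x)"
    and cont: "continuous_on UNIV w''"
    and bound: "\<And>x. \<bar>w x\<bar> \<le> B" and bound'': "\<And>x. \<bar>w'' x\<bar> \<le> B''"
  shows "green k (\<lambda>x. k\<^sup>2 * w x - w'' x) x = w x"
proof -
  define h where "h x = k\<^sup>2 * w x - w'' x" for x
  have "continuous_on UNIV w"
    using w' by (intro continuous_at_imp_continuous_on) (auto intro: DERIV_isCont)
  then have "continuous_on UNIV h"
    unfolding h_def[abs_def] by (intro continuous_intros cont)
  moreover have "\<bar>h y\<bar> \<le> k\<^sup>2 * B + B''" for y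
  proof -
    have "\<bar>h y\<bar> \<le> k\<^sup>2 * \<bar>w y\<bar> + \<bar>w'' y\<bar>"
      unfolding h_def using abs_triangle_ineq4[of "k\<^sup>2 * w y" "w'' y"] by (simp add: abs_mult)
    also have "\<dots> \<le> k\<^sup>2 * B + B''"
      by (intro add_mono mult_left_mono bound bound'') auto
    finally show ?thesis .
  qed
  ultimately interpret H: bounded_source k "k\<^sup>2 * B + B''" h
    using k by unfold_locales auto
  have "w x - green k h x = 0"
  proof (rule bounded_solution_of_homogeneous_eq_0[where d="\<lambda>x. w x - green k h x"
        and d'="\<lambda>x. w' x - green_deriv k h x", OF k])
    show "((\<lambda>x. w x - green k h x) has_real_derivative w' x - green_deriv k h x) (at x)" for x
      using w' H.has_real_derivative_green by (intro DERIV_diff)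
    show "((\<lambda>x. w' x - green_deriv k h x) has_real_derivative k\<^sup>2 * (w x - green k h x)) (at x)" for x
      using DERIV_diff[OF w'' H.has_real_derivative_green_deriv, of x] by (simp add: h_def algebra_simps)
    show "\<bar>w x - green k h x\<bar> \<le> B + (k\<^sup>2 * B + B'') / k\<^sup>2" for x
      using abs_triangle_ineq4[of "w x" "green k h x"] bound[of x] H.abs_green_le[of x] by linarith
  qed
  moreover have "h = (\<lambda>x. k\<^sup>2 * w x - w'' x)"
    by (simp add: h_def fun_eq_iff)
  ultimately show ?thesis
    by simp
qed

section \<open>The equation as a fixed point of a monotone map\<close>

lemma rho_sq:
  assumes "lam > 0"
  shows "(rho g lam)\<^sup>2 = (sqrt (g\<^sup>2 + 4 * lam) - g) / 2" and "\<bar>g\<bar> < sqrt (g\<^sup>2 + 4 * lam)"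
proof -
  have "sqrt (g\<^sup>2) < sqrt (g\<^sup>2 + 4 * lam)"
    using assms by (intro real_sqrt_less_mono) simp
  then show "\<bar>g\<bar> < sqrt (g\<^sup>2 + 4 * lam)"
    by simp
  then show "(rho g lam)\<^sup>2 = (sqrt (g\<^sup>2 + 4 * lam) - g) / 2"
    unfolding rho_def by (simp add: power_divide)
qed

lemma rho_pos: "lam > 0 \<Longrightarrow> rho g lam > 0"
  using rho_sq(2)[of lam g] by (auto simp: rho_def)

lemma rho_sq_add_pos: "lam > 0 \<Longrightarrow> (rho g lam)\<^sup>2 + g > 0"
  using rho_sq[of lam g] by (simp add: field_simps)

lemma rho_quartic:
  assumes "lam > 0"
  shows "(rho g lam) ^ 4 + g * (rho g lam)\<^sup>2 = lam"
proof -
  define s where "s = sqrt (g\<^sup>2 + 4 * lam)"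
  have rho_sq_eq: "(rho g lam)\<^sup>2 = (s - g) / 2"
    using rho_sq(1)[OF assms] by (simp add: s_def)
  have "(rho g lam) ^ 4 + g * (rho g lam)\<^sup>2 = ((s - g) / 2)\<^sup>2 + g * ((s - g) / 2)"
    by (simp flip: rho_sq_eq)
  also have "\<dots> = (s\<^sup>2 - g\<^sup>2) / 4"
    by (simp add: field_simps power2_eq_square)
  also have "s\<^sup>2 = g\<^sup>2 + 4 * lam"
    unfolding s_def using assms by (simp add: add_nonneg_pos)
  finally show ?thesis
    by simp
qed

lemma rho_mono: "0 < lam \<Longrightarrow> lam \<le> lam' \<Longrightarrow> rho g lam \<le> rho g lam'"
  unfolding rho_def by (intro divide_right_mono real_sqrt_le_mono diff_right_mono) auto

locale nls_potential =
  fixes L g \<omega> :: real and V :: "real \<Rightarrow> real"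
  assumes L_pos: "L > 0" and V_cont: "continuous_on UNIV V"
    and V_periodic: "\<And>x. V (x + L) = V x" and V_even: "\<And>x. V (- x) = V x"
    and \<omega>_gt: "\<omega> > - Inf (range V)"
begin

text \<open>\<open>lam1\<close> and \<open>lam2\<close> are the \<open>\<lambda>\<^sub>1\<^sup>2\<close> and \<open>\<lambda>\<^sub>2\<^sup>2\<close> of the paper.\<close>
definition "Vmin = Inf (range V)"
definition "Vmax = Sup (range V)"
definition "lam1 = \<omega> + Vmin"
definition "lam2 = \<omega> + Vmax"
definition "\<rho>1 = rho g lam1"
definition "\<rho>2 = rho g lam2"

lemma V_add_int_mult: "V (x + of_int m * L) = V x"
proof (induction m rule: int_induct[of _ 0])
  case (step1 i)
  then show ?case
    using V_periodic[of "x + of_int i * L"] by (simp add: algebra_simps)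
next
  case (step2 i)
  then show ?case
    using V_periodic[of "x + of_int (i - 1) * L"] by (simp add: algebra_simps)
qed simp

lemma range_V_eq: "range V = V ` {0..L}"
proof -
  have "V x \<in> V ` {0..L}" for x
  proof
    define m where "m = \<lfloor>x / L\<rfloor>"
    have "of_int m * L \<le> x" "x < (of_int m + 1) * L"
      using L_pos floor_divide_lower floor_divide_upper unfolding m_def by blast+
    then show "x - of_int m * L \<in> {0..L}"
      by (simp add: algebra_simps)
    show "V x = V (x - of_int m * L)"
      using V_add_int_mult[of "x - of_int m * L" m] by simp
  qed
  then show ?thesis
    by auto
qed

lemma compact_range_V: "compact (range V)"
  unfolding range_V_eq by (rule compact_continuous_image) (auto intro: continuous_on_subset[OF V_cont])

lemma V_bounds: "Vmin \<le> V x" "V x \<le> Vmax"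
  using compact_range_V[THEN compact_imp_bounded]
  unfolding Vmin_def Vmax_def
  by (auto intro!: cInf_lower cSup_upper bounded_imp_bdd_below bounded_imp_bdd_above)

lemma Vmax_attained: "\<exists>x\<in>{0..L}. V x = Vmax"
proof -
  have "Vmax \<in> range V"
    unfolding Vmax_def using compact_range_V
    by (intro closed_contains_Sup compact_imp_closed bounded_imp_bdd_above compact_imp_bounded) auto
  then show ?thesis
    unfolding range_V_eq by auto
qed

lemma lam1_pos: "lam1 > 0"
  using \<omega>_gt unfolding lam1_def Vmin_def by simp

lemma Vt_bounds: "lam1 \<le> \<omega> + V x" "\<omega> + V x \<le> lam2"
  unfolding lam1_def lam2_def using V_bounds[of x] by auto

lemma lam2_pos: "lam2 > 0"
  using lam1_pos Vt_bounds[of 0] by simp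

lemma rho1_pos: "\<rho>1 > 0"
  unfolding \<rho>1_def using rho_pos[OF lam1_pos] .

lemma rho1_le_rho2: "\<rho>1 \<le> \<rho>2"
  unfolding \<rho>1_def \<rho>2_def using rho_mono[OF lam1_pos] Vt_bounds[of 0] by simp

lemma rho2_pos: "\<rho>2 > 0"
  using rho1_pos rho1_le_rho2 by simp

lemma rho1_quartic: "\<rho>1 ^ 4 + g * \<rho>1\<^sup>2 = lam1"
  unfolding \<rho>1_def using rho_quartic[OF lam1_pos] .

lemma rho2_quartic: "\<rho>2 ^ 4 + g * \<rho>2\<^sup>2 = lam2"
  unfolding \<rho>2_def using rho_quartic[OF lam2_pos] .

lemma rho1_sq_add_pos: "\<rho>1\<^sup>2 + g > 0"
  unfolding \<rho>1_def using rho_sq_add_pos[OF lam1_pos] .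

definition "nonlin x u = (\<omega> + V x) * u - g * u ^ 3 - u ^ 5"

text \<open>\<open>K\<close> dominates \<open>-\<partial>\<^sub>u nonlin\<close> on \<open>[-\<rho>2, \<rho>2]\<close>, which makes \<open>F x\<close> nondecreasing there.\<close>
definition "K = 1 + 3 * \<bar>g\<bar> * \<rho>2\<^sup>2 + 5 * \<rho>2 ^ 4"
definition "\<kappa> = sqrt K"
definition "F x u = K * u + nonlin x u"
definition "T u = green \<kappa> (\<lambda>x. F x (u x))"
definition "admissible u \<longleftrightarrow> continuous_on UNIV u \<and> (\<forall>x. \<bar>u x\<bar> \<le> \<rho>2)"

lemma admissible_bounds: "admissible u \<Longrightarrow> - \<rho>2 \<le> u x \<and> u x \<le> \<rho>2"
  unfolding admissible_def by (metis abs_le_iff minus_le_iff)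

lemma K_pos: "K > 0"
  unfolding K_def by (simp add: add_pos_nonneg)

lemma kappa_pos: "\<kappa> > 0"
  unfolding \<kappa>_def using K_pos by simp

lemma kappa_sq: "\<kappa>\<^sup>2 = K"
  unfolding \<kappa>_def using K_pos by simp

lemma has_real_derivative_F:
  "(F x has_real_derivative K + (\<omega> + V x) - 3 * g * u\<^sup>2 - 5 * u ^ 4) (at u)"
  unfolding F_def[abs_def] nonlin_def by (auto intro!: derivative_eq_intros simp: algebra_simps)

lemma deriv_F_nonneg:
  assumes "\<bar>u\<bar> \<le> \<rho>2" shows "0 \<le> K + (\<omega> + V x) - 3 * g * u\<^sup>2 - 5 * u ^ 4"
proof -
  have "\<bar>u\<bar> \<le> \<bar>\<rho>2\<bar>"
    using assms rho2_pos by simp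
  then have u_sq: "u\<^sup>2 \<le> \<rho>2\<^sup>2"
    by (simp add: abs_le_square_iff)
  have "3 * g * u\<^sup>2 \<le> 3 * \<bar>g\<bar> * u\<^sup>2"
    by (simp add: mult_right_mono)
  also have "\<dots> \<le> 3 * \<bar>g\<bar> * \<rho>2\<^sup>2"
    using u_sq by (simp add: mult_left_mono)
  finally have "3 * g * u\<^sup>2 \<le> 3 * \<bar>g\<bar> * \<rho>2\<^sup>2" .
  moreover have "u ^ 4 \<le> \<rho>2 ^ 4"
    using power_mono[OF u_sq, of 2] by (simp flip: power_mult)
  moreover have "0 < \<omega> + V x"
    using Vt_bounds[of x] lam1_pos by simp
  ultimately show ?thesis
    unfolding K_def by simp
qed

lemma F_mono:
  assumes "- \<rho>2 \<le> u" "u \<le> v" "v \<le> \<rho>2" shows "F x u \<le> F x v"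
  using DERIV_nonneg_imp_nondecreasing[OF assms(2), of "F x"] assms
  by (meson has_real_derivative_F deriv_F_nonneg abs_le_iff order_trans minus_le_iff)

lemma F_odd: "F x (- u) = - F x u"
  unfolding F_def nonlin_def by simp

lemma F_reflect: "F (- x) u = F x u"
  unfolding F_def nonlin_def using V_even by simp

lemma F_periodic: "F (x + L) u = F x u"
  unfolding F_def nonlin_def using V_periodic by simp

lemma nonlin_rho1_nonneg: "0 \<le> nonlin x \<rho>1"
proof -
  have "nonlin x \<rho>1 = \<rho>1 * ((\<omega> + V x) - (\<rho>1 ^ 4 + g * \<rho>1\<^sup>2))"
    unfolding nonlin_def by (simp add: algebra_simps power_def)
  then show ?thesis
    using rho1_pos Vt_bounds(1)[of x] by (simp add: rho1_quartic)
qed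

lemma nonlin_rho2_nonpos: "nonlin x \<rho>2 \<le> 0"
proof -
  have "nonlin x \<rho>2 = \<rho>2 * ((\<omega> + V x) - (\<rho>2 ^ 4 + g * \<rho>2\<^sup>2))"
    unfolding nonlin_def by (simp add: algebra_simps power_def)
  then show ?thesis
    using rho2_pos Vt_bounds(2)[of x] by (simp add: rho2_quartic mult_nonneg_nonpos)
qed

lemma nonlin_decreasing_near_band:
  assumes nondeg: "\<forall>y\<in>{\<rho>1..\<rho>2}. \<forall>x\<in>{0..L}. 5 * y ^ 4 + 3 * g * y\<^sup>2 - (\<omega> + V x) > 0"
  obtains c \<delta> where "c > 0" "\<delta> > 0"
    "\<And>x u v. \<rho>1 - \<delta> \<le> u \<Longrightarrow> u \<le> v \<Longrightarrow> v \<le> \<rho>2 \<Longrightarrow> nonlin x v - nonlin x u \<le> - c * (v - u)"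
proof -
  define P where "P y = 5 * y ^ 4 + 3 * g * y\<^sup>2 - lam2" for y
  obtain xmax where xmax: "xmax \<in> {0..L}" "V xmax = Vmax"
    using Vmax_attained by blast
  have "P y > 0" if "y \<in> {\<rho>1..\<rho>2}" for y
  proof -
    have "5 * y ^ 4 + 3 * g * y\<^sup>2 - (\<omega> + V xmax) > 0"
      using nondeg that xmax(1) by blast
    then show ?thesis
      by (simp add: P_def lam2_def xmax(2))
  qed
  moreover have "continuous_on UNIV P"
    unfolding P_def by (intro continuous_intros)
  ultimately obtain c \<delta> where c: "c > 0" "\<delta> > 0" and P_ge: "\<And>y. \<rho>1 - \<delta> \<le> y \<Longrightarrow> y \<le> \<rho>2 \<Longrightarrow> c \<le> P y"
    using pos_on_Icc_extends_left rho1_le_rho2 by blast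
  have "nonlin x v - nonlin x u \<le> - c * (v - u)" if uv: "\<rho>1 - \<delta> \<le> u" "u \<le> v" "v \<le> \<rho>2" for x u v
  proof (cases "u = v")
    case False
    have "(nonlin x has_real_derivative (\<omega> + V x) - 3 * g * z\<^sup>2 - 5 * z ^ 4) (at z)" for z
      unfolding nonlin_def by (auto intro!: derivative_eq_intros simp: algebra_simps)
    then obtain z where z: "u < z" "z < v" "nonlin x v - nonlin x u = (v - u) * ((\<omega> + V x) - 3 * g * z\<^sup>2 - 5 * z ^ 4)"
      using MVT2[of u v "nonlin x"] False uv by force
    have "(\<omega> + V x) - 3 * g * z\<^sup>2 - 5 * z ^ 4 \<le> - c"
      using P_ge[of z] z uv Vt_bounds(2)[of x] by (simp add: P_def)
    then have "(v - u) * ((\<omega> + V x) - 3 * g * z\<^sup>2 - 5 * z ^ 4) \<le> (v - u) * (- c)"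
      using uv by (intro mult_left_mono) auto
    then show ?thesis
      using z(3) by (simp add: mult.commute)
  qed simp
  then show ?thesis
    using that c by blast
qed

lemma abs_F_le: "\<bar>u\<bar> \<le> \<rho>2 \<Longrightarrow> \<bar>F x u\<bar> \<le> K * \<rho>2"
  using F_mono[of "- \<rho>2" u x] F_mono[of u \<rho>2 x] F_odd[of x \<rho>2] nonlin_rho2_nonpos[of x] rho2_pos
  by (auto simp: F_def abs_le_iff)

lemma continuous_on_F: "continuous_on UNIV u \<Longrightarrow> continuous_on UNIV (\<lambda>x. F x (u x))"
  unfolding F_def nonlin_def by (intro continuous_intros V_cont)

lemma bounded_source_F: "admissible u \<Longrightarrow> bounded_source \<kappa> (K * \<rho>2) (\<lambda>x. F x (u x))"
  using kappa_pos continuous_on_F abs_F_le by unfold_locales (auto simp: admissible_def)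

lemma green_kappa_const: "green \<kappa> (\<lambda>_. K * c) x = c"
  using green_const[OF kappa_pos] K_pos by (simp add: kappa_sq)

lemma admissible_T: "admissible u \<Longrightarrow> admissible (T u)"
  using bounded_source.continuous_on_green[OF bounded_source_F]
    bounded_source.abs_green_le[OF bounded_source_F] K_pos
  by (auto simp: admissible_def T_def kappa_sq)

lemma T_mono:
  assumes "admissible u" "admissible v" "\<And>x. u x \<le> v x"
  shows "T u x \<le> T v x"
  unfolding T_def using assms
  by (intro green_mono[OF bounded_source_F bounded_source_F] F_mono) (auto dest: admissible_bounds)

lemma fixed_point_of_limit:
  assumes adm: "\<And>n. admissible (us n)" and step: "\<And>n. us (Suc n) = T (us n)"
    and lim: "\<And>x. (\<lambda>n. us n x) \<longlonglongrightarrow> u x"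
  shows "admissible u" and "T u = u"
proof -
  have "\<bar>u x - u y\<bar> \<le> 2 * (K * \<rho>2) / \<kappa> * \<bar>x - y\<bar>" for x y
  proof (rule LIMSEQ_le_const2)
    show "(\<lambda>n. \<bar>us (Suc n) x - us (Suc n) y\<bar>) \<longlonglongrightarrow> \<bar>u x - u y\<bar>"
      using lim[of x, THEN LIMSEQ_Suc] lim[of y, THEN LIMSEQ_Suc] by (intro tendsto_intros)
    show "\<exists>N. \<forall>n\<ge>N. \<bar>us (Suc n) x - us (Suc n) y\<bar> \<le> 2 * (K * \<rho>2) / \<kappa> * \<bar>x - y\<bar>"
      unfolding step T_def using bounded_source.green_lipschitz[OF bounded_source_F[OF adm]] by blast
  qed
  then have "(2 * (K * \<rho>2) / \<kappa>)-lipschitz_on UNIV u"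
    using K_pos kappa_pos rho2_pos by (intro lipschitz_onI) (auto simp: dist_real_def)
  moreover have "\<bar>u x\<bar> \<le> \<rho>2" for x
    using adm by (intro LIMSEQ_le_const2[OF tendsto_rabs[OF lim]]) (auto simp: admissible_def)
  ultimately show adm_u: "admissible u"
    unfolding admissible_def by (auto intro: lipschitz_on_continuous_on)
  show "T u = u"
  proof
    fix x
    have "(\<lambda>n. T (us n) x) \<longlonglongrightarrow> T u x"
      unfolding T_def
    proof (rule green_tendsto[OF bounded_source_F[OF adm] bounded_source_F[OF adm_u]])
      show "(\<lambda>n. F y (us n y)) \<longlonglongrightarrow> F y (u y)" for y
        unfolding F_def nonlin_def using lim[of y] by (intro tendsto_intros)
    qed
    then show "T u x = u x"
      using LIMSEQ_unique lim[of x, THEN LIMSEQ_Suc] by (simp add: step)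
  qed
qed

context
  fixes u :: "real \<Rightarrow> real"
  assumes adm: "admissible u" and fixed: "T u = u"
begin

lemma fixed_point_has_derivative:
  "(u has_real_derivative green_deriv \<kappa> (\<lambda>x. F x (u x)) x) (at x)"
  using bounded_source.has_real_derivative_green[OF bounded_source_F[OF adm]] fixed
  by (simp add: T_def)

lemma fixed_point_has_second_derivative:
  "(green_deriv \<kappa> (\<lambda>x. F x (u x)) has_real_derivative - nonlin x (u x)) (at x)"
proof -
  have "green \<kappa> (\<lambda>x. F x (u x)) x = u x"
    using fixed by (simp add: T_def fun_eq_iff)
  then show ?thesis
    using bounded_source.has_real_derivative_green_deriv[OF bounded_source_F[OF adm], of x]
    by (simp add: kappa_sq F_def)
qed

lemma fixed_point_is_solution: "is_solution (\<lambda>x. \<omega> + V x) g u"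
  unfolding is_solution_def
  using fixed_point_has_derivative fixed_point_has_second_derivative
  by (intro exI[of _ "green_deriv \<kappa> (\<lambda>x. F x (u x))"] exI[of _ "\<lambda>x. - nonlin x (u x)"])
     (simp add: nonlin_def)

end

section \<open>The periodic solution\<close>

definition "periodic_band u \<longleftrightarrow> continuous_on UNIV u \<and> (\<forall>x. \<rho>1 \<le> u x \<and> u x \<le> \<rho>2)
    \<and> (\<forall>x. u (x + L) = u x) \<and> (\<forall>x. u (- x) = u x)"

lemma periodic_band_bounds:
  assumes "periodic_band u" shows "\<rho>1 \<le> u x" "u x \<le> \<rho>2"
  using assms by (simp_all add: periodic_band_def)

lemma periodic_band_admissible:
  assumes u: "periodic_band u" shows "admissible u"
proof -
  have "\<bar>u x\<bar> \<le> \<rho>2" for x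
    using periodic_band_bounds[OF u, of x] rho1_pos by linarith
  then show ?thesis
    using u by (simp add: admissible_def periodic_band_def)
qed

lemma T_periodic_band:
  assumes u: "periodic_band u" shows "periodic_band (T u)"
proof -
  have adm: "admissible u"
    using periodic_band_admissible[OF u] .
  have lower: "K * \<rho>1 \<le> F y (u y)" and upper: "F y (u y) \<le> K * \<rho>2" for y
  proof -
    have b: "\<rho>1 \<le> u y" "u y \<le> \<rho>2"
      using periodic_band_bounds[OF u] .
    have "F y \<rho>1 \<le> F y (u y)" "F y (u y) \<le> F y \<rho>2"
      using b rho1_pos rho2_pos by (intro F_mono; linarith)+
    moreover have "K * \<rho>1 \<le> F y \<rho>1" "F y \<rho>2 \<le> K * \<rho>2"
      using nonlin_rho1_nonneg nonlin_rho2_nonpos by (simp_all add: F_def)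
    ultimately show "K * \<rho>1 \<le> F y (u y)" "F y (u y) \<le> K * \<rho>2"
      by linarith+
  qed
  have "green \<kappa> (\<lambda>_. K * \<rho>1) x \<le> green \<kappa> (\<lambda>x. F x (u x)) x" for x
    using bounded_source_const[OF kappa_pos] bounded_source_F[OF adm] lower by (rule green_mono)
  moreover have "green \<kappa> (\<lambda>x. F x (u x)) x \<le> green \<kappa> (\<lambda>_. K * \<rho>2) x" for x
    using bounded_source_F[OF adm] bounded_source_const[OF kappa_pos] upper by (rule green_mono)
  ultimately have "\<rho>1 \<le> T u x \<and> T u x \<le> \<rho>2" for x
    by (simp add: T_def green_kappa_const)
  moreover have "T u (x + L) = T u x" for x
    unfolding T_def using u by (intro green_periodic) (simp add: periodic_band_def F_periodic)
  moreover have "T u (- x) = T u x" for x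
    unfolding T_def using u by (intro green_even) (simp add: periodic_band_def F_reflect)
  ultimately show ?thesis
    using admissible_T[OF adm] by (simp add: periodic_band_def admissible_def)
qed

lemma periodic_solution_exists: "\<exists>p. periodic_band p \<and> T p = p"
proof -
  define us where "us n = (T ^^ n) (\<lambda>_. \<rho>2)" for n
  have band: "periodic_band (us n)" for n
    by (induction n) (use rho1_le_rho2 T_periodic_band in \<open>auto simp: us_def periodic_band_def\<close>)
  have step: "us (Suc n) = T (us n)" for n
    by (simp add: us_def)
  have decreasing: "us (Suc n) x \<le> us n x" for n x
  proof (induction n arbitrary: x)
    case 0
    show ?case
      using band[of 1] by (simp add: us_def periodic_band_def)
  next
    case (Suc n)
    have "T (us (Suc n)) x \<le> T (us n) x"
      using periodic_band_admissible[OF band] periodic_band_admissible[OF band] Suc.IH by (rule T_mono)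
    then show ?case
      by (simp add: step)
  qed
  define p where "p x = (INF n. us n x)" for x
  have lim: "(\<lambda>n. us n x) \<longlonglongrightarrow> p x" for x
    unfolding p_def using band decreasing
    by (intro LIMSEQ_decseq_INF decseq_SucI) (auto intro!: bdd_belowI[of _ \<rho>1] simp: periodic_band_def)
  note fixed = fixed_point_of_limit[OF periodic_band_admissible[OF band] step lim]
  have "periodic_band p"
    unfolding periodic_band_def
  proof (intro conjI allI)
    show "continuous_on UNIV p"
      using fixed(1) by (simp add: admissible_def)
    show "\<rho>1 \<le> p x" "p x \<le> \<rho>2" for x
      using band by (auto intro: LIMSEQ_le_const[OF lim] LIMSEQ_le_const2[OF lim] simp: periodic_band_def)
    show "p (x + L) = p x" "p (- x) = p x" for x
      using band lim[of x] by (auto intro: LIMSEQ_unique[OF lim] simp: periodic_band_def)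
  qed
  then show ?thesis
    using fixed(2) by blast
qed

section \<open>The kink and the odd solution\<close>

text \<open>\<open>kink x = \<rho>1 tanh (a x)\<close> is the odd kink of the cubic equation
  \<open>u'' + (\<rho>1\<^sup>2 + g) u (\<rho>1\<^sup>2 - u\<^sup>2) = 0\<close>, which is a subsolution of ours on \<open>[0, \<infinity>)\<close>.\<close>
definition "kink_rate = \<rho>1 * sqrt ((\<rho>1\<^sup>2 + g) / 2)"
definition "kink x = \<rho>1 * tanh (kink_rate * x)"
definition "kink' x = \<rho>1 * kink_rate * (1 - (tanh (kink_rate * x))\<^sup>2)"
definition "kink'' x = - 2 * kink_rate\<^sup>2 * \<rho>1 * tanh (kink_rate * x) * (1 - (tanh (kink_rate * x))\<^sup>2)"

lemma kink_rate_pos: "kink_rate > 0"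
  unfolding kink_rate_def using rho1_pos rho1_sq_add_pos by simp

lemma kink_rate_sq: "kink_rate\<^sup>2 = \<rho>1\<^sup>2 * ((\<rho>1\<^sup>2 + g) / 2)"
  unfolding kink_rate_def using rho1_sq_add_pos by (simp add: power_mult_distrib)

lemma has_real_derivative_kink: "(kink has_real_derivative kink' x) (at x)"
  unfolding kink_def[abs_def] kink'_def by (auto intro!: derivative_eq_intros)

lemma has_real_derivative_kink': "(kink' has_real_derivative kink'' x) (at x)"
  unfolding kink'_def[abs_def] kink''_def
  by (auto intro!: derivative_eq_intros simp: power2_eq_square algebra_simps)

lemma continuous_on_kink: "continuous_on UNIV kink"
  unfolding kink_def by (intro continuous_intros) auto

lemma continuous_on_kink'': "continuous_on UNIV kink''"
  unfolding kink''_def by (intro continuous_intros) auto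

lemma kink_odd: "kink (- x) = - kink x"
  unfolding kink_def by simp

lemma kink''_odd: "kink'' (- x) = - kink'' x"
  unfolding kink''_def by simp

lemma abs_kink_le: "\<bar>kink x\<bar> \<le> \<rho>1"
  unfolding kink_def using rho1_pos abs_tanh_le_1 by (simp add: abs_mult mult_left_le)

lemma kink_nonneg: "0 \<le> x \<Longrightarrow> 0 \<le> kink x"
  unfolding kink_def using rho1_pos kink_rate_pos by simp

lemma abs_kink''_le: "\<bar>kink'' x\<bar> \<le> 2 * kink_rate\<^sup>2 * \<rho>1"
proof -
  define t where "t = tanh (kink_rate * x)"
  have "\<bar>t\<bar> \<le> 1"
    unfolding t_def by (rule abs_tanh_le_1)
  then have "\<bar>1 - t\<^sup>2\<bar> \<le> 1"
    by (simp add: abs_le_square_iff[symmetric] abs_square_le_1)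
  with \<open>\<bar>t\<bar> \<le> 1\<close> have "\<bar>t * (1 - t\<^sup>2)\<bar> \<le> 1"
    by (simp add: abs_mult mult_le_one)
  then show ?thesis
    unfolding kink''_def t_def[symmetric] using rho1_pos kink_rate_pos
    by (simp add: abs_mult mult.assoc mult_left_le)
qed

lemma green_kink: "green \<kappa> (\<lambda>x. K * kink x - kink'' x) x = kink x"
  using green_of_bounded_solution[OF kappa_pos has_real_derivative_kink has_real_derivative_kink'
      continuous_on_kink'' abs_kink_le abs_kink''_le]
  by (simp add: kappa_sq)

lemma bounded_source_kink:
  "bounded_source \<kappa> (K * \<rho>1 + 2 * kink_rate\<^sup>2 * \<rho>1) (\<lambda>x. K * kink x - kink'' x)"
proof
  show "continuous_on UNIV (\<lambda>x. K * kink x - kink'' x)"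
    by (intro continuous_intros continuous_on_kink continuous_on_kink'')
  fix y
  have "\<bar>K * kink y - kink'' y\<bar> \<le> K * \<bar>kink y\<bar> + \<bar>kink'' y\<bar>"
    using abs_triangle_ineq4[of "K * kink y" "kink'' y"] K_pos by (simp add: abs_mult)
  also have "\<dots> \<le> K * \<rho>1 + 2 * kink_rate\<^sup>2 * \<rho>1"
    using K_pos by (intro add_mono mult_left_mono abs_kink_le abs_kink''_le) auto
  finally show "\<bar>K * kink y - kink'' y\<bar> \<le> K * \<rho>1 + 2 * kink_rate\<^sup>2 * \<rho>1" .
qed (rule kappa_pos)

lemma kink_subsolution:
  assumes y: "0 \<le> y" shows "K * kink y - kink'' y \<le> F y (kink y)"
proof -
  define t where "t = tanh (kink_rate * y)"
  define W where "W = kink y"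
  have W: "W = \<rho>1 * t"
    unfolding W_def kink_def t_def ..
  have t: "0 \<le> t" "t \<le> 1"
    unfolding t_def using kink_rate_pos y abs_tanh_le_1[of "kink_rate * y"] by auto
  then have W_nonneg: "0 \<le> W" and W_sq: "W\<^sup>2 \<le> \<rho>1\<^sup>2"
    unfolding W using rho1_pos by (auto simp: power_mult_distrib power_le_one mult_left_le)
  have "- kink'' y = 2 * kink_rate\<^sup>2 * \<rho>1 * t * (1 - t\<^sup>2)"
    unfolding kink''_def t_def by simp
  also have "\<dots> = \<rho>1\<^sup>2 * (\<rho>1\<^sup>2 + g) * \<rho>1 * t * (1 - t\<^sup>2)"
    unfolding kink_rate_sq by simp
  also have "\<dots> = W * (\<rho>1\<^sup>2 - W\<^sup>2) * (\<rho>1\<^sup>2 + g)"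
    unfolding W by (simp add: algebra_simps power2_eq_square)
  also have "\<dots> \<le> W * (\<rho>1\<^sup>2 - W\<^sup>2) * (\<rho>1\<^sup>2 + W\<^sup>2 + g)"
    using W_nonneg W_sq by (intro mult_left_mono) auto
  also have "\<dots> = lam1 * W - g * W ^ 3 - W ^ 5"
    unfolding rho1_quartic[symmetric] by (simp add: algebra_simps power_def)
  also have "\<dots> \<le> nonlin y W"
    unfolding nonlin_def using Vt_bounds(1)[of y] W_nonneg by (simp add: mult_right_mono)
  finally show ?thesis
    unfolding F_def W_def by simp
qed

lemma T_odd:
  assumes "\<And>x. u (- x) = - u x" shows "T u (- x) = - T u x"
  unfolding T_def by (rule green_odd) (simp add: assms F_odd F_reflect)

lemma T_mono_odd:
  assumes adm: "admissible u" "admissible v"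
    and odd: "\<And>x. u (- x) = - u x" "\<And>x. v (- x) = - v x"
    and le: "\<And>y. 0 \<le> y \<Longrightarrow> u y \<le> v y" and x: "0 \<le> x"
  shows "T u x \<le> T v x"
  unfolding T_def
proof (rule green_mono_odd[OF bounded_source_F[OF adm(1)] bounded_source_F[OF adm(2)] _ _ _ x])
  show "F (- y) (u (- y)) = - F y (u y)" "F (- y) (v (- y)) = - F y (v y)" for y
    by (simp_all add: odd F_odd F_reflect)
  show "F y (u y) \<le> F y (v y)" if "0 \<le> y" for y
    using le[OF that] admissible_bounds[OF adm(1)] admissible_bounds[OF adm(2)] by (intro F_mono) auto
qed

lemma admissible_kink: "admissible kink"
  unfolding admissible_def using continuous_on_kink abs_kink_le rho1_le_rho2 by (auto intro: order_trans)

lemma kink_le_T: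
  assumes u: "admissible u" "\<And>x. u (- x) = - u x" "\<And>y. 0 \<le> y \<Longrightarrow> kink y \<le> u y" and x: "0 \<le> x"
  shows "kink x \<le> T u x"
proof -
  have "kink x = green \<kappa> (\<lambda>x. K * kink x - kink'' x) x"
    by (rule green_kink[symmetric])
  also have "\<dots> \<le> T kink x"
    unfolding T_def
    by (rule green_mono_odd[OF bounded_source_kink bounded_source_F[OF admissible_kink] _ _ _ x])
       (simp_all add: kink_odd kink''_odd F_odd F_reflect kink_subsolution)
  also have "\<dots> \<le> T u x"
    by (rule T_mono_odd[where u=kink and v=u, OF admissible_kink u(1) kink_odd u(2) u(3) x])
  finally show ?thesis .
qed

lemma kink_tendsto: "(kink \<longlongrightarrow> \<rho>1) at_top"
proof -
  have "((\<lambda>x. tanh (kink_rate * x)) \<longlongrightarrow> 1) at_top"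
    using kink_rate_pos
    by (intro filterlim_compose[OF tanh_real_at_top] filterlim_tendsto_pos_mult_at_top[OF tendsto_const])
       (auto simp: filterlim_ident)
  then show ?thesis
    unfolding kink_def[abs_def] using tendsto_mult_left[of _ 1 at_top \<rho>1] by simp
qed

end

locale nls_periodic_solution = nls_potential +
  fixes p :: "real \<Rightarrow> real"
  assumes p_band: "periodic_band p" and p_fixed: "T p = p"
begin

definition "odd_band u \<longleftrightarrow> continuous_on UNIV u \<and> (\<forall>x. u (- x) = - u x)
    \<and> (\<forall>x\<ge>0. kink x \<le> u x \<and> u x \<le> p x)"

lemma odd_band_odd: "odd_band u \<Longrightarrow> u (- x) = - u x"
  by (simp add: odd_band_def)

lemma odd_band_bounds: "odd_band u \<Longrightarrow> 0 \<le> x \<Longrightarrow> kink x \<le> u x \<and> u x \<le> p x"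
  by (simp add: odd_band_def)

lemma odd_band_le_p:
  assumes u: "odd_band u" shows "u x \<le> p x"
proof (cases "0 \<le> x")
  case True
  then show ?thesis using odd_band_bounds[OF u] by simp
next
  case False
  then have "0 \<le> u (- x)"
    using odd_band_bounds[OF u, of "- x"] kink_nonneg[of "- x"] by simp
  then have "u x \<le> 0"
    using odd_band_odd[OF u, of x] by simp
  then show ?thesis
    using periodic_band_bounds[OF p_band, of x] rho1_pos by linarith
qed

lemma odd_band_admissible:
  assumes u: "odd_band u" shows "admissible u"
proof -
  have pos: "\<bar>u x\<bar> \<le> \<rho>2" if "0 \<le> x" for x
    using odd_band_bounds[OF u that] kink_nonneg[OF that] periodic_band_bounds[OF p_band, of x] by simp
  have "\<bar>u x\<bar> \<le> \<rho>2" for x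
  proof (cases "0 \<le> x")
    case False
    then show ?thesis
      using pos[of "- x"] odd_band_odd[OF u, of x] by simp
  qed (rule pos)
  then show ?thesis
    using u by (simp add: admissible_def odd_band_def)
qed

lemma odd_band_kink: "odd_band kink"
proof -
  have "kink x \<le> p x" for x
    using abs_kink_le[of x] periodic_band_bounds[OF p_band, of x] by linarith
  then show ?thesis
    unfolding odd_band_def using continuous_on_kink kink_odd by simp
qed

lemma T_odd_band:
  assumes u: "odd_band u" shows "odd_band (T u)"
proof -
  have adm: "admissible u"
    using odd_band_admissible[OF u] .
  have "T u x \<le> p x" for x
    using T_mono[OF adm periodic_band_admissible[OF p_band] odd_band_le_p[OF u]] p_fixed by simp
  moreover have "kink x \<le> T u x" if "0 \<le> x" for x
    using adm odd_band_odd[OF u] _ that by (rule kink_le_T) (use odd_band_bounds[OF u] in simp)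
  moreover have "T u (- x) = - T u x" for x
    using odd_band_odd[OF u] by (rule T_odd)
  ultimately show ?thesis
    using admissible_T[OF adm] by (simp add: odd_band_def admissible_def)
qed

lemma odd_solution_exists: "\<exists>\<phi>. odd_band \<phi> \<and> T \<phi> = \<phi>"
proof -
  define us where "us n = (T ^^ n) kink" for n
  have step: "us (Suc n) = T (us n)" for n
    by (simp add: us_def)
  have band: "odd_band (us n)" for n
    by (induction n) (simp_all add: us_def odd_band_kink T_odd_band)
  note adm = odd_band_admissible[OF band]
  have increasing: "us n x \<le> us (Suc n) x" if "0 \<le> x" for n x
    using that
  proof (induction n arbitrary: x)
    case 0
    then show ?case
      using kink_le_T[where u=kink, OF admissible_kink kink_odd] by (simp add: us_def)
  next
    case (Suc n)
    have "T (us n) x \<le> T (us (Suc n)) x"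
      using adm adm odd_band_odd[OF band] odd_band_odd[OF band] Suc.IH Suc.prems by (rule T_mono_odd)
    then show ?case
      by (metis step)
  qed
  obtain \<phi> where lim: "\<And>x. (\<lambda>n. us n x) \<longlonglongrightarrow> \<phi> x" and odd: "\<And>x. \<phi> (- x) = - \<phi> x"
  proof (rule pointwise_limit_of_odd_increasing[where us=us and B=p])
    show "us n (- x) = - us n x" "0 \<le> x \<Longrightarrow> us n x \<le> us (Suc n) x" "0 \<le> x \<Longrightarrow> us n x \<le> p x"
      for n x
      using odd_band_odd[OF band] increasing odd_band_bounds[OF band] by auto
  qed blast
  note fixed = fixed_point_of_limit[OF adm step lim]
  have "odd_band \<phi>"
    unfolding odd_band_def
  proof (intro conjI allI impI)
    show "continuous_on UNIV \<phi>"
      using fixed(1) by (simp add: admissible_def)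
    show "\<phi> (- x) = - \<phi> x" for x
      by (rule odd)
    show "kink x \<le> \<phi> x" "\<phi> x \<le> p x" if "0 \<le> x" for x
      using odd_band_bounds[OF band that]
      by (auto intro: LIMSEQ_le_const[OF lim] LIMSEQ_le_const2[OF lim])
  qed
  then show ?thesis
    using fixed(2) by blast
qed

section \<open>Asymptotics of the odd solution\<close>

lemma odd_solution_asymptotics:
  assumes nondeg: "\<forall>y\<in>{\<rho>1..\<rho>2}. \<forall>x\<in>{0..L}. 5 * y ^ 4 + 3 * g * y\<^sup>2 - (\<omega> + V x) > 0"
    and \<phi>: "odd_band \<phi>" "T \<phi> = \<phi>"
  shows "((\<lambda>x. \<phi> x - p x) \<longlongrightarrow> 0) at_top"
    and "((\<lambda>x. deriv \<phi> x - deriv p x) \<longlongrightarrow> 0) at_top"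
    and "((\<lambda>x. \<phi> x - (- p x)) \<longlongrightarrow> 0) at_bot"
proof -
  obtain c \<delta> where c: "c > 0" and \<delta>: "\<delta> > 0"
    and decreasing: "\<And>x u v. \<rho>1 - \<delta> \<le> u \<Longrightarrow> u \<le> v \<Longrightarrow> v \<le> \<rho>2 \<Longrightarrow> nonlin x v - nonlin x u \<le> - c * (v - u)"
    using nonlin_decreasing_near_band[OF nondeg] by blast
  have "eventually (\<lambda>x. \<rho>1 - \<delta> < kink x \<and> 0 \<le> x) at_top"
    using order_tendstoD(1)[OF kink_tendsto, of "\<rho>1 - \<delta>"] \<delta> eventually_ge_at_top[of 0]
    by (auto elim: eventually_conj)
  then obtain X where X: "\<And>x. X \<le> x \<Longrightarrow> \<rho>1 - \<delta> < kink x \<and> 0 \<le> x"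
    unfolding eventually_at_top_linorder by blast
  note adm_p = periodic_band_admissible[OF p_band] and adm_\<phi> = odd_band_admissible[OF \<phi>(1)]
  define d where "d x = p x - \<phi> x" for x
  define d' where "d' x = green_deriv \<kappa> (\<lambda>x. F x (p x)) x - green_deriv \<kappa> (\<lambda>x. F x (\<phi> x)) x" for x
  define d'' where "d'' x = nonlin x (\<phi> x) - nonlin x (p x)" for x
  have d: "(d has_real_derivative d' x) (at x)" for x
    unfolding d_def[abs_def] d'_def
    by (intro DERIV_diff fixed_point_has_derivative adm_p adm_\<phi> p_fixed \<phi>(2))
  have d': "(d' has_real_derivative d'' x) (at x)" for x
    unfolding d'_def[abs_def] d''_def
    using DERIV_diff[OF fixed_point_has_second_derivative[OF adm_p p_fixed]
        fixed_point_has_second_derivative[OF adm_\<phi> \<phi>(2)]] by simp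
  have bounds: "\<rho>1 - \<delta> \<le> \<phi> x" "\<phi> x \<le> p x" "p x \<le> \<rho>2" if "X \<le> x" for x
    using X[OF that] odd_band_bounds[OF \<phi>(1)] periodic_band_bounds[OF p_band] by force+
  have d_nonneg: "0 \<le> d x" and d_le: "d x \<le> \<rho>2" and d''_ge: "c * d x \<le> d'' x" if "X \<le> x" for x
    using bounds[OF that] decreasing[of "\<phi> x" "p x" x] X[OF that] kink_nonneg[of x]
      odd_band_bounds[OF \<phi>(1), of x] by (auto simp: d_def d''_def algebra_simps)
  note decay = convex_decay_tendsto_0[OF d d' d_nonneg d_le d''_ge c]
    convex_decay_deriv_tendsto_0[OF d d' d_nonneg d_le d''_ge c]
  show "((\<lambda>x. \<phi> x - p x) \<longlongrightarrow> 0) at_top"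
    using tendsto_minus[OF decay(1)] by (simp add: d_def)
  have "deriv \<phi> x - deriv p x = - d' x" for x
    using DERIV_imp_deriv[OF fixed_point_has_derivative[OF adm_p p_fixed]]
      DERIV_imp_deriv[OF fixed_point_has_derivative[OF adm_\<phi> \<phi>(2)]] by (simp add: d'_def)
  then show "((\<lambda>x. deriv \<phi> x - deriv p x) \<longlongrightarrow> 0) at_top"
    using tendsto_minus[OF decay(2)] by simp
  have "(\<lambda>x. \<phi> (- x) - (- p (- x))) = d"
    using odd_band_odd[OF \<phi>(1)] periodic_band_def p_band by (auto simp: d_def)
  then show "((\<lambda>x. \<phi> x - (- p x)) \<longlongrightarrow> 0) at_bot"
    using decay(1) by (simp add: filterlim_at_bot_mirror)
qed

end

theorem mainTheorem6:
  fixes L g1 \<omega> :: real and V :: "real \<Rightarrow> real"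
  defines "Vmin \<equiv> Inf (range V)"
      and "Vmax \<equiv> Sup (range V)"
  defines "\<rho>1 \<equiv> rho g1 (\<omega> + Vmin)"
      and "\<rho>2 \<equiv> rho g1 (\<omega> + Vmax)"
  assumes L_pos: "L > 0"
      and V_cont: "continuous_on UNIV V"
      and V_per: "\<forall>x. V (x + L) = V x"
      and V_even: "\<forall>x. V (- x) = V x"
      and omega: "\<omega> > - Vmin"
      and nondeg: "\<forall>y\<in>{\<rho>1..\<rho>2}. \<forall>x\<in>{0..L}. 5 * y^4 + 3 * g1 * y^2 - (\<omega> + V x) > 0"
  shows "\<exists>\<phi>p \<phi>.
           is_solution (\<lambda>x. \<omega> + V x) g1 \<phi>p \<and>
           (\<forall>x. \<phi>p (x + L) = \<phi>p x) \<and>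
           (\<forall>x. 0 < \<phi>p x \<and> \<rho>1 \<le> \<phi>p x \<and> \<phi>p x \<le> \<rho>2) \<and>
           is_solution (\<lambda>x. \<omega> + V x) g1 \<phi> \<and>
           (\<forall>x. \<phi> (- x) = - \<phi> x) \<and>
           ((\<lambda>x. \<phi> x - \<phi>p x) \<longlongrightarrow> 0) at_top \<and>
           ((\<lambda>x. deriv \<phi> x - deriv \<phi>p x) \<longlongrightarrow> 0) at_top \<and>
           ((\<lambda>x. \<phi> x - (- \<phi>p x)) \<longlongrightarrow> 0) at_bot"
proof -
  interpret P: nls_potential L g1 \<omega> V
    using L_pos V_cont V_per V_even omega unfolding Vmin_def by unfold_locales auto
  have rho_eqs: "P.\<rho>1 = \<rho>1" "P.\<rho>2 = \<rho>2"
    by (simp_all add: P.\<rho>1_def P.\<rho>2_def P.lam1_def P.lam2_def P.Vmin_def P.Vmax_def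
        \<rho>1_def \<rho>2_def Vmin_def Vmax_def)
  obtain p where p: "P.periodic_band p" "P.T p = p"
    using P.periodic_solution_exists by blast
  interpret Q: nls_periodic_solution L g1 \<omega> V p
    using p by unfold_locales
  obtain \<phi> where \<phi>: "Q.odd_band \<phi>" "P.T \<phi> = \<phi>"
    using Q.odd_solution_exists by blast
  show ?thesis
  proof (intro exI conjI allI)
    show "is_solution (\<lambda>x. \<omega> + V x) g1 p" "is_solution (\<lambda>x. \<omega> + V x) g1 \<phi>"
      using P.fixed_point_is_solution P.periodic_band_admissible Q.odd_band_admissible p \<phi> by auto
    show "p (x + L) = p x" "0 < p x" "\<rho>1 \<le> p x" "p x \<le> \<rho>2" for x
      using p(1) P.rho1_pos unfolding P.periodic_band_def rho_eqs by (auto intro: less_le_trans)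
    show "\<phi> (- x) = - \<phi> x" for x
      using Q.odd_band_odd[OF \<phi>(1)] .
    show "((\<lambda>x. \<phi> x - p x) \<longlongrightarrow> 0) at_top" "((\<lambda>x. deriv \<phi> x - deriv p x) \<longlongrightarrow> 0) at_top"
      "((\<lambda>x. \<phi> x - (- p x)) \<longlongrightarrow> 0) at_bot"
      using Q.odd_solution_asymptotics[OF _ \<phi>] nondeg unfolding rho_eqs by blast+
  qed
qed

end
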